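(* Let $d\in\mathbb{N}$, let $\Omega\subset\mathbb{R}^d$ be a bounded domain, $\alpha\in(0,1)$, $\phi\in C_c^\infty(\Omega;\mathbb{R}^d)$, and $f_t\coloneqq I+t\phi$, where $\varepsilon>0$ is such that $(f_t)_{t\in(-\varepsilon,\varepsilon)}$ is a local variation in $\Omega$. Then there exist $0<\varepsilon_0<\varepsilon$ and $L>0$ such that for all $t\in(-\varepsilon_0,\varepsilon_0)$ and all measurable sets $E,F\subset\Omega$ with $P_\alpha(E)<\infty$, \[ |\lambda(f_t(E)\cap F)-\lambda(E\cap F)|\le L|t|^\alpha P_\alpha(E), \] and in particular $\lambda(f_t(E)\mathbin{\triangle}E)\le L|t|^\alpha P_\alpha(E)$.
   Context: $I$ denotes the identity map on $\mathbb{R}^d$, $\lambda$ the Lebesgue measure, $\mathbin{\triangle}$ the symmetric difference. For measurable $E\subset\mathbb{R}^d$, $P_\alpha(E)\coloneqq\int_{\mathbb{R}^d}\int_{\mathbb{R}^d}\frac{|\chi_E(x)-\chi_E(y)|}{|x-y|^{d+\alpha}}\,\mathrm{d}x\,\mathrm{d}y$. A local variation in $\Omega$ is a smooth map $(t,x)\mapsto f_t(x)$ on $(-\varepsilon,\varepsilon)\times\mathbb{R}^d$ with each $f_t$ a diffeomorphism of $\mathbb{R}^d$, $f_0=I$, and $\{x:f_t(x)\neq x\}$ contained in a fixed compact subset of $\Omega$ for all $t$; for $\phi\in C_c^\infty(\Omega;\mathbb{R}^d)$, $I+t\phi$ is such a local variation for some $\varepsilon>0$. *)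

theory Defs
  imports "HOL-Analysis.Analysis"
begin

primrec Ck_on :: "'a::euclidean_space set \<Rightarrow> nat \<Rightarrow> ('a \<Rightarrow> 'b::euclidean_space) \<Rightarrow> bool" where
  "Ck_on S 0 f = continuous_on S f"
| "Ck_on S (Suc k) f =
     ((\<forall>x\<in>S. f differentiable (at x)) \<and>
      (\<forall>v. Ck_on S k (\<lambda>x. frechet_derivative f (at x) v)))"

definition smooth_on :: "'a::euclidean_space set \<Rightarrow> ('a \<Rightarrow> 'b::euclidean_space) \<Rightarrow> bool" where
  "smooth_on S f \<longleftrightarrow> (\<forall>k. Ck_on S k f)"

definition Cc_infty :: "'a::euclidean_space set \<Rightarrow> ('a \<Rightarrow> 'a) \<Rightarrow> bool" where
  "Cc_infty \<Omega> \<phi> \<longleftrightarrow> smooth_on UNIV \<phi> \<and>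
     compact (closure {x. \<phi> x \<noteq> 0}) \<and> closure {x. \<phi> x \<noteq> 0} \<subseteq> \<Omega>"

definition diffeomorphism :: "('a::euclidean_space \<Rightarrow> 'a) \<Rightarrow> bool" where
  "diffeomorphism g \<longleftrightarrow> bij g \<and> smooth_on UNIV g \<and> smooth_on UNIV (inv g)"

definition local_variation :: "real \<Rightarrow> 'a::euclidean_space set \<Rightarrow> (real \<Rightarrow> 'a \<Rightarrow> 'a) \<Rightarrow> bool" where
  "local_variation \<epsilon> \<Omega> f \<longleftrightarrow>
     \<epsilon> > 0 \<and>
     smooth_on ({-\<epsilon><..<\<epsilon>} \<times> UNIV) (\<lambda>p. f (fst p) (snd p)) \<and>
     (\<forall>t\<in>{-\<epsilon><..<\<epsilon>}. diffeomorphism (f t)) \<and>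
     f 0 = id \<and>
     (\<exists>K. compact K \<and> K \<subseteq> \<Omega> \<and> (\<forall>t\<in>{-\<epsilon><..<\<epsilon>}. {x. f t x \<noteq> x} \<subseteq> K))"

definition frac_perimeter :: "real \<Rightarrow> 'a::euclidean_space set \<Rightarrow> ennreal" where
  "frac_perimeter \<alpha> E =
     (\<integral>\<^sup>+ x. (\<integral>\<^sup>+ y. ennreal (\<bar>indicator E x - indicator E y\<bar> /
         norm (x - y) powr (real DIM('a) + \<alpha>)) \<partial>lebesgue) \<partial>lebesgue)"

end

theory Submission
  imports Defs
begin

text \<open>Let g be the inverse of f = I + t phi; it moves points by at most r = |t| sup |phi|.
  Replace E by a Borel set C that differs from it by a null set, and let u be the indicator
  of C. If u (g y) and u y differ, then every p in the ball B(y, r) differs in u from g y or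
  from y, so integrating over that ball gives
  |B_r| lambda {y. u (g y) \<noteq> u y} \<le> int int_{|y - p| < r} |u (g y) - u p| + int int_{|y - p| < r} |u y - u p|.
  The substitution x = g y costs at most Lip(f)^d (Lipschitz images of balls, via Vitali
  covering) and doubles the radius; then each term is a local energy
  int int_{|x - p| < R} |u x - u p| \<le> R^(d + alpha) P_alpha(E).
  Dividing by |B_r|, which is of order r^d, leaves r^alpha, and f(E) sym_diff E lies in
  {y. u (g y) \<noteq> u y} up to null sets.\<close>

lemma emeasure_UN_countable_le:
  assumes I: "countable I" and X: "\<And>i. i \<in> I \<Longrightarrow> X i \<in> sets M"
  shows "emeasure M (\<Union>(X ` I)) \<le> (\<integral>\<^sup>+i. emeasure M (X i) \<partial>count_space I)"
proof -
  have "\<Union>(X ` I) \<in> sets M" using I X by (intro sets.countable_UN') auto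
  then have "emeasure M (\<Union>(X ` I)) = (\<integral>\<^sup>+x. indicator (\<Union>(X ` I)) x \<partial>M)"
    by simp
  also have "\<dots> \<le> (\<integral>\<^sup>+x. \<integral>\<^sup>+i. indicator (X i) x \<partial>count_space I \<partial>M)"
  proof (intro nn_integral_mono)
    fix x
    show "indicator (\<Union>(X ` I)) x \<le> (\<integral>\<^sup>+i. (indicator (X i) x :: ennreal) \<partial>count_space I)"
    proof (cases "x \<in> \<Union>(X ` I)")
      case True
      then obtain j where "j \<in> I" "x \<in> X j" by auto
      with True show ?thesis
        using nn_integral_ge_point[of j I "\<lambda>i. indicator (X i) x :: ennreal"] by simp
    qed simp
  qed
  also have "\<dots> = (\<integral>\<^sup>+i. \<integral>\<^sup>+x. indicator (X i) x \<partial>M \<partial>count_space I)"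
    using I X by (intro nn_integral_count_space_nn_integral) auto
  also have "\<dots> = (\<integral>\<^sup>+i. emeasure M (X i) \<partial>count_space I)"
    using X by (intro nn_integral_cong) simp
  finally show ?thesis .
qed

lemma measure_le_if_emeasure_mult_le:
  assumes le: "ennreal c * emeasure M A \<le> ennreal b" and c: "0 < c" and b: "0 \<le> b"
  shows "measure M A \<le> b / c"
proof -
  have "emeasure M A \<noteq> \<infinity>"
    using le c by (auto simp: ennreal_mult_top top_unique)
  then have "ennreal (c * measure M A) \<le> ennreal b"
    using le c by (simp add: emeasure_eq_ennreal_measure ennreal_mult)
  then show ?thesis
    using c b by (simp add: ennreal_le_iff field_simps)
qed

lemma measure_Int_diff_le_sym_diff:
  assumes A: "A \<in> fmeasurable M" and B: "B \<in> fmeasurable M" and F: "F \<in> sets M"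
  shows "\<bar>measure M (A \<inter> F) - measure M (B \<inter> F)\<bar> \<le> measure M (sym_diff A B)"
proof -
  have le: "measure M (X \<inter> F) \<le> measure M (Y \<inter> F) + measure M (sym_diff A B)"
    if XY: "X \<in> {A, B}" "Y \<in> {A, B}" for X Y
  proof -
    have fm: "X \<in> fmeasurable M" "Y \<inter> F \<in> fmeasurable M" "sym_diff A B \<in> fmeasurable M"
      using XY A B F by (auto intro: fmeasurable_Int_fmeasurable)
    have "measure M (X \<inter> F) \<le> measure M ((Y \<inter> F) \<union> sym_diff A B)"
      using XY fm F by (intro measure_mono_fmeasurable) auto
    also have "\<dots> \<le> measure M (Y \<inter> F) + measure M (sym_diff A B)"
      using fm by (intro measure_Un_le) auto
    finally show ?thesis .
  qed
  show ?thesis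
    using le[of A B] le[of B A] by simp
qed

lemma image_eq_vimage_if_inverse:
  assumes gf: "\<And>x. g (f x) = x" and fg: "\<And>y. f (g y) = y"
  shows "f ` A = g -` A"
proof (intro set_eqI iffI)
  fix y assume "y \<in> f ` A"
  then show "y \<in> g -` A" using gf by auto
next
  fix y assume "y \<in> g -` A"
  then have "f (g y) \<in> f ` A" by simp
  then show "y \<in> f ` A" by (simp only: fg)
qed

lemma emeasure_lebesgue_ball_scale:
  fixes a b :: "'a::euclidean_space"
  assumes "0 \<le> c" "0 \<le> r"
  shows "emeasure lebesgue (ball a (c * r)) = ennreal (c ^ DIM('a)) * emeasure lebesgue (ball b r)"
  using assms
  by (subst (1 2) emeasure_lebesgue_ball_conv_unit_ball)
    (simp_all add: power_mult_distrib ennreal_mult mult.assoc)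

lemma lipschitz_image_null_sets:
  fixes f :: "'a::euclidean_space \<Rightarrow> 'a"
  assumes "L-lipschitz_on UNIV f" "N \<in> null_sets lebesgue"
  shows "f ` N \<in> null_sets lebesgue"
proof -
  have "negligible (f ` N)"
  proof (rule negligible_locally_Lipschitz_image)
    show "negligible N" using assms(2) by (simp add: negligible_iff_null_sets)
    show "\<exists>T B. open T \<and> x \<in> T \<and> (\<forall>y\<in>N \<inter> T. norm (f y - f x) \<le> B * norm (y - x))" for x
      using lipschitz_onD[OF assms(1)] by (intro exI[of _ UNIV] exI[of _ L]) (simp add: dist_norm)
  qed simp
  then show ?thesis by (simp add: negligible_iff_null_sets)
qed

lemma emeasure_lipschitz_image_le_open_superset:
  fixes f :: "'a::euclidean_space \<Rightarrow> 'a"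
  assumes lip: "L-lipschitz_on UNIV f" and L: "0 < L" and "S \<subseteq> T" "open T"
  shows "emeasure lebesgue (f ` S) \<le> ennreal (L ^ DIM('a)) * emeasure lebesgue T"
proof -
  \<comment> \<open>Vitali: up to a null set, S is covered by disjoint balls inside T, and f maps
      each ball B(a, r) into B(f a, L r).\<close>
  define K where "K = {(a, r). 0 < r \<and> ball a r \<subseteq> T}"
  have "\<exists>i. i \<in> K \<and> x \<in> ball (fst i) (snd i) \<and> snd i < d" if "x \<in> S" "0 < d" for x d
  proof -
    obtain r where "0 < r" "ball x r \<subseteq> T"
      using \<open>open T\<close> \<open>S \<subseteq> T\<close> \<open>x \<in> S\<close> by (meson openE subsetD)
    then show ?thesis
      using \<open>0 < d\<close> by (intro exI[of _ "(x, min (d/2) r)"]) (auto simp: K_def)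
  qed
  then obtain C where C: "countable C" "C \<subseteq> K"
    and disj: "pairwise (\<lambda>i j. disjnt (ball (fst i) (snd i)) (ball (fst j) (snd j))) C"
    and null: "negligible (S - (\<Union>i\<in>C. ball (fst i) (snd i)))"
    by (rule Vitali_covering_theorem_balls)
  define N where "N = S - (\<Union>i\<in>C. ball (fst i) (snd i))"
  have fN: "f ` N \<in> null_sets lebesgue"
    using null lip by (intro lipschitz_image_null_sets) (auto simp: N_def negligible_iff_null_sets)
  have "f ` S \<subseteq> (\<Union>i\<in>C. ball (f (fst i)) (L * snd i)) \<union> f ` N"
  proof
    fix y assume "y \<in> f ` S"
    then obtain x where x: "x \<in> S" "y = f x" by auto
    show "y \<in> (\<Union>i\<in>C. ball (f (fst i)) (L * snd i)) \<union> f ` N"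
    proof (cases "x \<in> N")
      case False
      then obtain i where i: "i \<in> C" "dist (fst i) x < snd i" using x by (auto simp: N_def)
      have "dist (f (fst i)) y \<le> L * dist (fst i) x"
        using lipschitz_onD[OF lip] x by simp
      also have "\<dots> < L * snd i" using i L by simp
      finally show ?thesis using i by auto
    qed (use x in auto)
  qed
  then have "emeasure lebesgue (f ` S) \<le> emeasure lebesgue ((\<Union>i\<in>C. ball (f (fst i)) (L * snd i)) \<union> f ` N)"
    using fN by (intro emeasure_mono) (auto simp: borel_open open_UN)
  also have "\<dots> = emeasure lebesgue (\<Union>i\<in>C. ball (f (fst i)) (L * snd i))"
    using fN by (subst emeasure_Un_null_set) (auto simp: borel_open open_UN)
  also have "\<dots> \<le> (\<integral>\<^sup>+i. emeasure lebesgue (ball (f (fst i)) (L * snd i)) \<partial>count_space C)"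
    using C(1) by (intro emeasure_UN_countable_le) auto
  also have "\<dots> = (\<integral>\<^sup>+i. ennreal (L ^ DIM('a)) * emeasure lebesgue (ball (fst i) (snd i)) \<partial>count_space C)"
    using C(2) L by (intro nn_integral_cong emeasure_lebesgue_ball_scale) (auto simp: K_def)
  also have "\<dots> = ennreal (L ^ DIM('a)) * emeasure lebesgue (\<Union>i\<in>C. ball (fst i) (snd i))"
    using C(1) disj
    by (simp add: nn_integral_cmult emeasure_UN_countable disjoint_family_on_def pairwise_def disjnt_def)
  also have "\<dots> \<le> ennreal (L ^ DIM('a)) * emeasure lebesgue T"
    using C(2) by (intro mult_left_mono emeasure_mono) (force simp: K_def borel_open \<open>open T\<close>)+
  finally show ?thesis .
qed

lemma emeasure_lipschitz_image_le:
  fixes f :: "'a::euclidean_space \<Rightarrow> 'a"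
  assumes lip: "L-lipschitz_on UNIV f" and L: "0 < L" and S: "S \<in> sets lebesgue"
  shows "emeasure lebesgue (f ` S) \<le> ennreal (L ^ DIM('a)) * emeasure lebesgue S"
proof (rule ennreal_le_epsilon)
  fix e :: real assume "0 < e"
  then have "0 < e / L ^ DIM('a)" using L by simp
  then obtain T where T: "open T" "S \<subseteq> T" "emeasure lebesgue (T - S) < ennreal (e / L ^ DIM('a))"
    using sets_lebesgue_outer_open[OF S] by blast
  have "emeasure lebesgue T \<le> emeasure lebesgue S + emeasure lebesgue (T - S)"
    using emeasure_subadditive[OF S, of "T - S"] S T(1,2)
    by (simp only: Un_Diff_cancel Un_absorb1 sets.Diff sets_lborel borel_open sets_completionI_sets)
  also have "\<dots> \<le> emeasure lebesgue S + ennreal (e / L ^ DIM('a))"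
    using T(3) by (intro add_left_mono) simp
  finally have T_le: "emeasure lebesgue T \<le> emeasure lebesgue S + ennreal (e / L ^ DIM('a))" .
  have "emeasure lebesgue (f ` S) \<le> ennreal (L ^ DIM('a)) * emeasure lebesgue T"
    by (rule emeasure_lipschitz_image_le_open_superset[OF lip L T(2,1)])
  also have "\<dots> \<le> ennreal (L ^ DIM('a)) * (emeasure lebesgue S + ennreal (e / L ^ DIM('a)))"
    using T_le by (rule mult_left_mono) simp
  also have "\<dots> = ennreal (L ^ DIM('a)) * emeasure lebesgue S + ennreal e"
    using L \<open>0 < e\<close> by (simp add: distrib_left flip: ennreal_mult)
  finally show "emeasure lebesgue (f ` S) \<le> ennreal (L ^ DIM('a)) * emeasure lebesgue S + ennreal e" .
qed

lemma nn_integral_comp_inverse_lipschitz_le: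
  fixes f g :: "'a::euclidean_space \<Rightarrow> 'a"
  assumes gf: "\<And>x. g (f x) = x" and fg: "\<And>y. f (g y) = y"
    and g: "g \<in> borel_measurable borel"
    and lip: "L-lipschitz_on UNIV f" and L: "0 < L"
    and G: "G \<in> borel_measurable borel"
  shows "(\<integral>\<^sup>+y. G (g y) \<partial>lborel) \<le> ennreal (L ^ DIM('a)) * (\<integral>\<^sup>+x. G x \<partial>lborel)"
proof -
  have "emeasure (distr lborel lborel g) A \<le> ennreal (L ^ DIM('a)) * emeasure lborel A"
    if A: "A \<in> sets lborel" for A
  proof -
    have "g -` A = f ` A"
      by (rule image_eq_vimage_if_inverse[OF gf fg, symmetric])
    moreover have "g -` A \<in> sets lborel"
      using measurable_sets[OF g, of A] A by simp
    ultimately have "emeasure (distr lborel lborel g) A = emeasure lebesgue (f ` A)"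
      using A g by (simp add: emeasure_distr)
    also have "\<dots> \<le> ennreal (L ^ DIM('a)) * emeasure lebesgue A"
      using A by (intro emeasure_lipschitz_image_le[OF lip L]) simp
    finally show ?thesis using A by simp
  qed
  then have "distr lborel lborel g \<le> scale_measure (ennreal (L ^ DIM('a))) lborel"
    unfolding le_measure_iff
    by (simp add: space_scale_measure le_fun_def) (metis emeasure_notin_sets sets_distr sets_lborel zero_le)
  then have "(\<integral>\<^sup>+x. G x \<partial>distr lborel lborel g) \<le> (\<integral>\<^sup>+x. G x \<partial>scale_measure (ennreal (L ^ DIM('a))) lborel)"
    by (intro nn_integral_mono_measure) simp
  then show ?thesis
    using g G by (simp add: nn_integral_distr nn_integral_scale_measure)
qed

lemma lipschitz_bij_image_sets_lebesgue:
  fixes f g :: "'a::euclidean_space \<Rightarrow> 'a"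
  assumes gf: "\<And>x. g (f x) = x" and fg: "\<And>y. f (g y) = y" and g: "g \<in> borel_measurable borel"
    and lip: "L-lipschitz_on UNIV f" and E: "E \<in> sets lebesgue"
  shows "f ` E \<in> sets lebesgue"
proof -
  obtain C N where C: "C \<in> sets borel" and N: "negligible N" and E: "C \<union> N = E"
    using sets_lebesgue_almost_borel[OF E] .
  have "f ` E = g -` C \<union> f ` N"
    using image_eq_vimage_if_inverse[OF gf fg] by (simp flip: E add: image_Un)
  moreover have "g -` C \<in> sets lebesgue"
    using measurable_sets[OF g C] by simp
  moreover have "f ` N \<in> null_sets lebesgue"
    using N by (intro lipschitz_image_null_sets[OF lip]) (simp add: negligible_iff_null_sets)
  ultimately show ?thesis by (metis null_setsD2 sets.Un)
qed

text \<open>Unlike the fractional perimeter, this integrates over lborel, so that the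
  measurability prover applies to the integrands.\<close>

definition gagliardo_energy :: "real \<Rightarrow> ('a::euclidean_space \<Rightarrow> real) \<Rightarrow> ennreal" where
  "gagliardo_energy s u =
     (\<integral>\<^sup>+x. \<integral>\<^sup>+y. ennreal (\<bar>u x - u y\<bar> / norm (x - y) powr s) \<partial>lborel \<partial>lborel)"

lemma frac_perimeter_eq_gagliardo_energy:
  fixes C :: "'a::euclidean_space set"
  assumes C: "C \<in> sets borel" and N: "N \<in> null_sets lebesgue" and E: "E = C \<union> N"
  shows "frac_perimeter \<alpha> E = gagliardo_energy (real DIM('a) + \<alpha>) (indicator C)"
proof -
  define h where "h v x y = ennreal (\<bar>indicator v x - indicator v y\<bar> / norm (x - y) powr (real DIM('a) + \<alpha>))"
    for v and x y :: 'a
  have hEC: "h E x y = h C x y" if "x \<notin> N" "y \<notin> N" for x y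
    using that by (simp add: h_def E indicator_def)
  have ae: "AE x in lebesgue. x \<notin> N"
    using N by (rule AE_not_in)
  have "frac_perimeter \<alpha> E = (\<integral>\<^sup>+x. \<integral>\<^sup>+y. h E x y \<partial>lebesgue \<partial>lebesgue)"
    by (simp add: frac_perimeter_def h_def)
  also have "\<dots> = (\<integral>\<^sup>+x. \<integral>\<^sup>+y. h C x y \<partial>lebesgue \<partial>lebesgue)"
    using ae
  proof (intro nn_integral_cong_AE, eventually_elim)
    case (elim x)
    show ?case
      using ae by (intro nn_integral_cong_AE, eventually_elim) (simp add: hEC elim)
  qed
  also have "\<dots> = (\<integral>\<^sup>+x. \<integral>\<^sup>+y. h C x y \<partial>lborel \<partial>lborel)"
    using C unfolding h_def by (simp only: nn_integral_completion)
  finally show ?thesis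
    by (simp add: gagliardo_energy_def h_def)
qed

lemma nn_integral_local_difference_le:
  fixes u :: "'a::euclidean_space \<Rightarrow> real"
  assumes [measurable]: "u \<in> borel_measurable borel" and "0 \<le> s" "0 \<le> R"
  shows "(\<integral>\<^sup>+x. \<integral>\<^sup>+y. ennreal (indicator (ball x R) y * \<bar>u x - u y\<bar>) \<partial>lborel \<partial>lborel)
    \<le> ennreal (R powr s) * gagliardo_energy s u"
proof -
  have pt: "ennreal (indicator (ball x R) y * \<bar>u x - u y\<bar>)
      \<le> ennreal (R powr s) * ennreal (\<bar>u x - u y\<bar> / norm (x - y) powr s)" for x y :: 'a
  proof (cases "y \<in> ball x R \<and> x \<noteq> y")
    case True
    then have "norm (x - y) powr s \<le> R powr s" "0 < norm (x - y)"
      using assms(2) by (auto simp: dist_norm intro: powr_mono2)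
    then have "\<bar>u x - u y\<bar> \<le> R powr s * (\<bar>u x - u y\<bar> / norm (x - y) powr s)"
      by (simp add: field_simps) (metis abs_ge_zero mult.commute mult_left_mono)
    then show ?thesis
      using True by (simp add: ennreal_leI flip: ennreal_mult)
  qed auto
  have "(\<integral>\<^sup>+x. \<integral>\<^sup>+y. ennreal (indicator (ball x R) y * \<bar>u x - u y\<bar>) \<partial>lborel \<partial>lborel)
    \<le> (\<integral>\<^sup>+x. \<integral>\<^sup>+y. ennreal (R powr s) * ennreal (\<bar>u x - u y\<bar> / norm (x - y) powr s) \<partial>lborel \<partial>lborel)"
    by (intro nn_integral_mono pt)
  also have "\<dots> = ennreal (R powr s) * gagliardo_energy s u"
    by (simp add: gagliardo_energy_def nn_integral_cmult)
  finally show ?thesis .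
qed

lemma emeasure_ball_le_difference_integrals:
  fixes u :: "'a::euclidean_space \<Rightarrow> real"
  assumes [measurable]: "u \<in> borel_measurable borel" and jump: "1 \<le> \<bar>u a - u b\<bar>"
  shows "emeasure lborel (ball b r)
    \<le> (\<integral>\<^sup>+y. ennreal (indicator (ball b r) y * \<bar>u a - u y\<bar>) \<partial>lborel)
      + (\<integral>\<^sup>+y. ennreal (indicator (ball b r) y * \<bar>u b - u y\<bar>) \<partial>lborel)"
proof -
  have pt: "ennreal (indicator (ball b r) y)
      \<le> ennreal (indicator (ball b r) y * \<bar>u a - u y\<bar>) + ennreal (indicator (ball b r) y * \<bar>u b - u y\<bar>)"
    for y :: 'a
  proof -
    have "indicator (ball b r) y
        \<le> indicator (ball b r) y * \<bar>u a - u y\<bar> + indicator (ball b r) y * \<bar>u b - u y\<bar>"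
      using jump by (auto simp: indicator_def)
    then show ?thesis by (simp add: ennreal_leI flip: ennreal_plus)
  qed
  have [measurable]: "ball b r \<in> sets borel" by simp
  have "emeasure lborel (ball b r) = (\<integral>\<^sup>+y. ennreal (indicator (ball b r) y) \<partial>lborel)"
    by (simp add: ennreal_indicator)
  also have "\<dots> \<le> (\<integral>\<^sup>+y. ennreal (indicator (ball b r) y * \<bar>u a - u y\<bar>)
      + ennreal (indicator (ball b r) y * \<bar>u b - u y\<bar>) \<partial>lborel)"
    by (intro nn_integral_mono pt)
  also have "\<dots> = (\<integral>\<^sup>+y. ennreal (indicator (ball b r) y * \<bar>u a - u y\<bar>) \<partial>lborel)
      + (\<integral>\<^sup>+y. ennreal (indicator (ball b r) y * \<bar>u b - u y\<bar>) \<partial>lborel)"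
    by (intro nn_integral_add) (simp_all, measurable)
  finally show ?thesis .
qed

lemma emeasure_jump_set_le_gagliardo_energy:
  fixes f g :: "'a::euclidean_space \<Rightarrow> 'a" and u :: "'a \<Rightarrow> real"
  assumes u [measurable]: "u \<in> borel_measurable borel"
    and gf: "\<And>x. g (f x) = x" and fg: "\<And>y. f (g y) = y" and g [measurable]: "g \<in> borel_measurable borel"
    and lip: "L-lipschitz_on UNIV f" and L: "0 < L"
    and disp: "\<And>y. dist (g y) y \<le> r" and s: "0 \<le> s"
  shows "emeasure lborel (ball (0::'a) r) * emeasure lborel {y. 1 \<le> \<bar>u (g y) - u y\<bar>}
    \<le> ennreal (L ^ DIM('a) * (2 * r) powr s + r powr s) * gagliardo_energy s u"
proof -
  have r: "0 \<le> r" using disp[of 0] zero_le_dist order_trans by blast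
  define D where "D = {y. 1 \<le> \<bar>u (g y) - u y\<bar>}"
  define T where "T R a b = (\<integral>\<^sup>+y. ennreal (indicator (ball b R) y * \<bar>u a - u y\<bar>) \<partial>lborel)" for R a b
  have [measurable]: "D \<in> sets borel"
    unfolding D_def by measurable
  have T_measurable [measurable]: "(\<lambda>x. T R (h x) x) \<in> borel_measurable borel"
    if [measurable]: "h \<in> borel_measurable borel" for R h
    unfolding T_def indicator_def mem_ball by measurable
  have ball_eq: "emeasure lborel (ball y r) = emeasure lborel (ball (0::'a) r)" for y :: 'a
    using emeasure_lebesgue_ball_scale[of 1 r y 0] r by simp
  have pt: "emeasure lborel (ball (0::'a) r) * indicator D y \<le> T r (g y) y + T r y y" for y
  proof (cases "y \<in> D")
    case True
    then have "emeasure lborel (ball y r) \<le> T r (g y) y + T r y y"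
      unfolding T_def D_def by (intro emeasure_ball_le_difference_integrals[OF u]) simp
    then show ?thesis using True ball_eq[of y] by simp
  qed simp
  have T_shift: "T r (g y) y \<le> T (2 * r) (g y) (g y)" for y
  proof -
    have "ball y r \<subseteq> ball (g y) (2 * r)"
      using disp[of y] by (simp add: ball_subset_ball_iff dist_commute)
    then show ?thesis
      unfolding T_def by (intro nn_integral_mono ennreal_leI mult_right_mono) (auto simp: indicator_def)
  qed
  have "emeasure lborel (ball (0::'a) r) * emeasure lborel D
      = (\<integral>\<^sup>+y. emeasure lborel (ball (0::'a) r) * indicator D y \<partial>lborel)"
    by (simp add: nn_integral_cmult_indicator)
  also have "\<dots> \<le> (\<integral>\<^sup>+y. T r (g y) y + T r y y \<partial>lborel)"
    by (intro nn_integral_mono pt)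
  also have "\<dots> = (\<integral>\<^sup>+y. T r (g y) y \<partial>lborel) + (\<integral>\<^sup>+y. T r y y \<partial>lborel)"
    by (intro nn_integral_add) simp_all
  also have "\<dots> \<le> (\<integral>\<^sup>+y. T (2 * r) (g y) (g y) \<partial>lborel) + (\<integral>\<^sup>+y. T r y y \<partial>lborel)"
    by (intro add_right_mono nn_integral_mono T_shift)
  also have "\<dots> \<le> ennreal (L ^ DIM('a)) * (\<integral>\<^sup>+x. T (2 * r) x x \<partial>lborel) + (\<integral>\<^sup>+y. T r y y \<partial>lborel)"
    by (intro add_right_mono nn_integral_comp_inverse_lipschitz_le[OF gf fg g lip L]) simp
  also have "\<dots> \<le> ennreal (L ^ DIM('a)) * (ennreal ((2 * r) powr s) * gagliardo_energy s u)
      + ennreal (r powr s) * gagliardo_energy s u"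
    unfolding T_def using s r
    by (intro add_mono mult_left_mono nn_integral_local_difference_le) simp_all
  also have "\<dots> = ennreal (L ^ DIM('a) * (2 * r) powr s + r powr s) * gagliardo_energy s u"
    using L by (simp add: ennreal_mult ennreal_plus distrib_right mult.assoc)
  finally show ?thesis by (simp add: D_def)
qed

lemma image_symdiff_subset_jump_set:
  assumes gf: "\<And>x. g (f x) = x" and fg: "\<And>y. f (g y) = y" and E: "E = C \<union> N"
  shows "sym_diff (f ` E) E
    \<subseteq> {y. 1 \<le> \<bar>indicator C (g y) - indicator C y :: real\<bar>} \<union> N \<union> f ` N"
proof
  fix y assume y: "y \<in> sym_diff (f ` E) E"
  have "y \<in> f ` E \<longleftrightarrow> g y \<in> E"
    using image_eq_vimage_if_inverse[OF gf fg] by blast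
  with y show "y \<in> {y. 1 \<le> \<bar>indicator C (g y) - indicator C y :: real\<bar>} \<union> N \<union> f ` N"
    by (auto simp: E indicator_def gf)
qed

lemma emeasure_image_symdiff_le:
  fixes f g :: "'a::euclidean_space \<Rightarrow> 'a" and \<alpha> :: real
  assumes gf: "\<And>x. g (f x) = x" and fg: "\<And>y. f (g y) = y" and g: "g \<in> borel_measurable borel"
    and lip: "L-lipschitz_on UNIV f" and L: "0 < L"
    and disp: "\<And>x. dist (f x) x \<le> r" and "0 \<le> \<alpha>" and E: "E \<in> sets lebesgue"
  shows "emeasure lborel (ball (0::'a) r) * emeasure lebesgue (sym_diff (f ` E) E)
    \<le> ennreal (L ^ DIM('a) * (2 * r) powr (real DIM('a) + \<alpha>) + r powr (real DIM('a) + \<alpha>)) * frac_perimeter \<alpha> E"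
proof -
  obtain C N where C [measurable]: "C \<in> sets borel" and N: "negligible N" and CN: "C \<union> N = E"
    using sets_lebesgue_almost_borel[OF E] .
  have N: "N \<in> null_sets lebesgue"
    using N by (simp add: negligible_iff_null_sets)
  define J where "J = {y. 1 \<le> \<bar>indicator C (g y) - indicator C y :: real\<bar>}"
  have [measurable]: "J \<in> sets borel"
    unfolding J_def using g by measurable
  have fN: "N \<union> f ` N \<in> null_sets lebesgue"
    using N lipschitz_image_null_sets[OF lip N] by auto
  have "sym_diff (f ` E) E \<subseteq> J \<union> (N \<union> f ` N)"
    using image_symdiff_subset_jump_set[OF gf fg CN[symmetric]] by (auto simp: J_def)
  then have "emeasure lebesgue (sym_diff (f ` E) E) \<le> emeasure lebesgue (J \<union> (N \<union> f ` N))"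
    using fN by (intro emeasure_mono) auto
  also have "\<dots> = emeasure lborel J"
    using fN by (subst emeasure_Un_null_set) auto
  finally have "emeasure lborel (ball (0::'a) r) * emeasure lebesgue (sym_diff (f ` E) E)
      \<le> emeasure lborel (ball (0::'a) r) * emeasure lborel J"
    by (rule mult_left_mono) simp
  also have "\<dots> \<le> ennreal (L ^ DIM('a) * (2 * r) powr (real DIM('a) + \<alpha>) + r powr (real DIM('a) + \<alpha>))
      * gagliardo_energy (real DIM('a) + \<alpha>) (indicator C)"
    unfolding J_def
  proof (rule emeasure_jump_set_le_gagliardo_energy[OF _ gf fg g lip L])
    show "dist (g y) y \<le> r" for y
      using disp[of "g y"] by (simp add: fg dist_commute)
  qed (use \<open>0 \<le> \<alpha>\<close> in simp_all)
  also have "gagliardo_energy (real DIM('a) + \<alpha>) (indicator C) = frac_perimeter \<alpha> E"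
    using C N CN by (intro frac_perimeter_eq_gagliardo_energy[symmetric]) auto
  finally show ?thesis .
qed

lemma measure_image_symdiff_le:
  fixes f g :: "'a::euclidean_space \<Rightarrow> 'a" and \<alpha> :: real
  assumes gf: "\<And>x. g (f x) = x" and fg: "\<And>y. f (g y) = y" and g: "g \<in> borel_measurable borel"
    and lip: "L-lipschitz_on UNIV f" and L: "0 < L"
    and disp: "\<And>x. dist (f x) x \<le> r" and \<alpha>: "0 \<le> \<alpha>" and E: "E \<in> sets lebesgue"
    and P: "frac_perimeter \<alpha> E < \<infinity>"
  shows "measure lebesgue (sym_diff (f ` E) E)
    \<le> (L ^ DIM('a) * 2 powr (real DIM('a) + \<alpha>) + 1) / measure lebesgue (ball (0::'a) 1)
      * r powr \<alpha> * enn2real (frac_perimeter \<alpha> E)"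
proof (cases "r = 0")
  case True
  then have "f = (\<lambda>x. x)"
    using disp by (intro ext) simp
  then show ?thesis using True by simp
next
  case False
  then have r: "0 < r"
    using disp[of 0] by (metis zero_le_dist order.trans order.not_eq_order_implies_strict)
  define s where "s = real DIM('a) + \<alpha>"
  define \<omega> where "\<omega> = measure lebesgue (ball (0::'a) 1)"
  define p where "p = enn2real (frac_perimeter \<alpha> E)"
  have \<omega>: "0 < \<omega>" and ball: "emeasure lborel (ball (0::'a) r) = ennreal (r ^ DIM('a) * \<omega>)"
    using r emeasure_lebesgue_ball_conv_unit_ball[of r "0::'a"] emeasure_lborel_ball_finite[of "0::'a" 1]
    by (auto simp: \<omega>_def emeasure_eq_ennreal_measure ennreal_mult)
  have "ennreal (r ^ DIM('a) * \<omega>) * emeasure lebesgue (sym_diff (f ` E) E)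
    \<le> ennreal ((L ^ DIM('a) * (2 * r) powr s + r powr s) * p)"
    using emeasure_image_symdiff_le[OF gf fg g lip L disp \<alpha> E] P L r
    by (simp add: ball p_def s_def ennreal_mult less_top)
  then have "measure lebesgue (sym_diff (f ` E) E)
    \<le> (L ^ DIM('a) * (2 * r) powr s + r powr s) * p / (r ^ DIM('a) * \<omega>)"
    using r \<omega> L by (intro measure_le_if_emeasure_mult_le) (simp_all add: p_def)
  also have "\<dots> = (L ^ DIM('a) * 2 powr s + 1) / \<omega> * r powr \<alpha> * p"
    using r \<omega> by (simp add: s_def powr_add powr_mult powr_realpow field_simps)
  finally show ?thesis by (simp add: s_def \<omega>_def p_def)
qed

lemma bounded_range_if_vanishing_outside_compact:
  assumes "continuous_on UNIV h" "compact K" "\<And>x. x \<notin> K \<Longrightarrow> h x = 0"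
  shows "bounded (range h)"
proof -
  have "bounded (h ` K)"
    using assms by (intro compact_imp_bounded compact_continuous_image) (auto intro: continuous_on_subset)
  moreover have "range h \<subseteq> insert 0 (h ` K)"
    using assms(3) by auto
  ultimately show ?thesis
    by (metis bounded_insert bounded_subset)
qed

lemma frechet_derivative_vanishing_outside_closed:
  assumes "closed K" "\<And>x. x \<notin> K \<Longrightarrow> h x = 0" "x \<notin> K"
  shows "frechet_derivative h (at x) = (\<lambda>_. 0)"
proof -
  have "((\<lambda>_. 0) has_derivative (\<lambda>_. 0)) (at x)"
    by simp
  then have "(h has_derivative (\<lambda>_. 0)) (at x)"
    by (rule has_derivative_transform_within_open[of _ _ _ _ "- K"]) (use assms in auto)
  then show ?thesis
    by (simp add: frechet_derivative_at[symmetric])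
qed

lemma Cc_infty_support:
  assumes "Cc_infty \<Omega> \<phi>"
  shows "compact (closure {x. \<phi> x \<noteq> 0})" and "\<And>x. x \<notin> closure {x. \<phi> x \<noteq> 0} \<Longrightarrow> \<phi> x = 0"
  using assms closure_subset[of "{x. \<phi> x \<noteq> 0}"] by (auto simp: Cc_infty_def)

lemma Cc_infty_bounded:
  assumes "Cc_infty \<Omega> \<phi>"
  shows "bounded (range \<phi>)"
proof (rule bounded_range_if_vanishing_outside_compact[OF _ Cc_infty_support[OF assms]])
  show "continuous_on UNIV \<phi>"
    using assms by (simp add: Cc_infty_def smooth_on_def flip: Ck_on.simps(1))
qed

lemma Cc_infty_lipschitz:
  assumes "Cc_infty \<Omega> \<phi>"
  obtains B where "B-lipschitz_on UNIV \<phi>"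
proof -
  define K where "K = closure {x. \<phi> x \<noteq> 0}"
  have K: "compact K" and vanish: "\<And>x. x \<notin> K \<Longrightarrow> \<phi> x = 0"
    unfolding K_def using Cc_infty_support[OF assms] by blast+
  define D where "D x = frechet_derivative \<phi> (at x)" for x
  have "Ck_on UNIV (Suc 0) \<phi>"
    using assms unfolding Cc_infty_def smooth_on_def by blast
  then have deriv: "(\<phi> has_derivative D x) (at x)" and cont: "continuous_on UNIV (\<lambda>x. D x v)" for x v
    by (auto simp: D_def frechet_derivative_works)
  have "bounded (range (\<lambda>x. D x b))" for b
    using K cont frechet_derivative_vanishing_outside_closed[OF compact_imp_closed[OF K] vanish]
    by (intro bounded_range_if_vanishing_outside_compact) (auto simp: D_def)
  then obtain C where C: "\<And>b x. norm (D x b) \<le> C b"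
    unfolding bounded_iff by (metis rangeI)
  have "onorm (D x) \<le> (\<Sum>b\<in>Basis. C b)" for x
    using onorm_componentwise[OF has_derivative_bounded_linear[OF deriv]] C
    by (meson order_trans sum_mono)
  moreover have "0 \<le> (\<Sum>b\<in>Basis. C b)"
    using C by (meson norm_ge_zero order_trans sum_nonneg)
  ultimately have "(\<Sum>b\<in>Basis. C b)-lipschitz_on UNIV \<phi>"
    using deriv by (intro bounded_derivative_imp_lipschitz) auto
  then show ?thesis ..
qed

lemma diffeomorphismD:
  assumes "diffeomorphism f"
  shows "\<And>x. inv f (f x) = x" "\<And>y. f (inv f y) = y" "inv f \<in> borel_measurable borel"
proof -
  have "bij f" "continuous_on UNIV (inv f)"
    using assms by (auto simp: diffeomorphism_def smooth_on_def dest: spec[of _ 0])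
  then show "\<And>x. inv f (f x) = x" "\<And>y. f (inv f y) = y" "inv f \<in> borel_measurable borel"
    by (simp_all add: bij_is_inj bij_is_surj surj_f_inv_f borel_measurable_continuous_onI)
qed

lemma lipschitz_on_add_scaleR:
  fixes \<phi> :: "'a::real_normed_vector \<Rightarrow> 'a"
  assumes "B-lipschitz_on UNIV \<phi>" and "\<bar>t\<bar> \<le> \<epsilon>"
  shows "(1 + \<epsilon> * B)-lipschitz_on UNIV (\<lambda>x. x + t *\<^sub>R \<phi> x)"
  using assms lipschitz_on_nonneg[OF assms(1)]
  by (intro lipschitz_on_mono[OF lipschitz_on_add[OF lipschitz_on_id lipschitz_on_cmult[OF assms(1)]]])
    (auto intro: mult_right_mono)

lemma measure_diffeomorphism_image_estimates:
  fixes f :: "'a::euclidean_space \<Rightarrow> 'a" and \<alpha> :: real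
  assumes f: "diffeomorphism f" and lip: "L-lipschitz_on UNIV f" and L: "0 < L"
    and disp: "\<And>x. dist (f x) x \<le> r" and \<alpha>: "0 \<le> \<alpha>"
    and E: "E \<in> sets lebesgue" "bounded E" and F: "F \<in> sets lebesgue"
    and P: "frac_perimeter \<alpha> E < \<infinity>"
  defines "c \<equiv> (L ^ DIM('a) * 2 powr (real DIM('a) + \<alpha>) + 1) / measure lebesgue (ball (0::'a) 1)"
  shows "measure lebesgue (sym_diff (f ` E) E) \<le> c * r powr \<alpha> * enn2real (frac_perimeter \<alpha> E)"
    and "\<bar>measure lebesgue (f ` E \<inter> F) - measure lebesgue (E \<inter> F)\<bar>
      \<le> c * r powr \<alpha> * enn2real (frac_perimeter \<alpha> E)"
proof -
  note inv = diffeomorphismD[OF f]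
  show symdiff: "measure lebesgue (sym_diff (f ` E) E) \<le> c * r powr \<alpha> * enn2real (frac_perimeter \<alpha> E)"
    unfolding c_def by (rule measure_image_symdiff_le[OF inv lip L disp \<alpha> E(1) P])
  have "uniformly_continuous_on E f"
    using lipschitz_on_subset[OF lip subset_UNIV] by (rule lipschitz_on_uniformly_continuous)
  then have "bounded (f ` E)"
    using E(2) by (rule bounded_uniformly_continuous_image)
  then have "E \<in> lmeasurable" "f ` E \<in> lmeasurable"
    using E lipschitz_bij_image_sets_lebesgue[OF inv lip E(1)] by (auto intro: bounded_set_imp_lmeasurable)
  then show "\<bar>measure lebesgue (f ` E \<inter> F) - measure lebesgue (E \<inter> F)\<bar>
      \<le> c * r powr \<alpha> * enn2real (frac_perimeter \<alpha> E)"
    using measure_Int_diff_le_sym_diff[OF _ _ F] symdiff by fastforce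
qed

theorem lemma2p8:
  fixes \<Omega> :: "'a::euclidean_space set" and \<alpha> \<epsilon> :: real and \<phi> :: "'a \<Rightarrow> 'a"
  assumes "open \<Omega>" and "connected \<Omega>" and "bounded \<Omega>"
    and "0 < \<alpha>" and "\<alpha> < 1"
    and "Cc_infty \<Omega> \<phi>"
    and "local_variation \<epsilon> \<Omega> (\<lambda>t x. x + t *\<^sub>R \<phi> x)"
  shows "\<exists>\<epsilon>0 L. 0 < \<epsilon>0 \<and> \<epsilon>0 < \<epsilon> \<and> 0 < L \<and>
    (\<forall>t E F. \<bar>t\<bar> < \<epsilon>0 \<longrightarrow> E \<in> sets lebesgue \<longrightarrow> F \<in> sets lebesgue \<longrightarrow>
       E \<subseteq> \<Omega> \<longrightarrow> F \<subseteq> \<Omega> \<longrightarrow> frac_perimeter \<alpha> E < \<infinity> \<longrightarrow>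
       \<bar>measure lebesgue ((\<lambda>x. x + t *\<^sub>R \<phi> x) ` E \<inter> F) - measure lebesgue (E \<inter> F)\<bar>
         \<le> L * \<bar>t\<bar> powr \<alpha> * enn2real (frac_perimeter \<alpha> E) \<and>
       measure lebesgue (((\<lambda>x. x + t *\<^sub>R \<phi> x) ` E - E) \<union> (E - (\<lambda>x. x + t *\<^sub>R \<phi> x) ` E))
         \<le> L * \<bar>t\<bar> powr \<alpha> * enn2real (frac_perimeter \<alpha> E))"
proof -
  obtain \<epsilon>_pos: "0 < \<epsilon>" and diffeo: "\<And>t. \<bar>t\<bar> < \<epsilon> \<Longrightarrow> diffeomorphism (\<lambda>x. x + t *\<^sub>R \<phi> x)"
    using assms(7) by (auto simp: local_variation_def abs_less_iff)
  obtain M where M: "0 < M" "\<And>x. norm (\<phi> x) \<le> M"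
    using Cc_infty_bounded[OF assms(6)] by (auto simp: bounded_pos)
  obtain B where B: "B-lipschitz_on UNIV \<phi>"
    using Cc_infty_lipschitz[OF assms(6)] .
  define L where "L = 1 + \<epsilon> * B"
  have L: "0 < L"
    using \<epsilon>_pos lipschitz_on_nonneg[OF B] by (simp add: L_def add_pos_nonneg)
  define C where "C = (L ^ DIM('a) * 2 powr (real DIM('a) + \<alpha>) + 1) / measure lebesgue (ball (0::'a) 1) * M powr \<alpha>"
  have "0 < C"
    using L M by (simp add: C_def add_nonneg_pos)
  have "\<bar>measure lebesgue ((\<lambda>x. x + t *\<^sub>R \<phi> x) ` E \<inter> F) - measure lebesgue (E \<inter> F)\<bar>
      \<le> C * \<bar>t\<bar> powr \<alpha> * enn2real (frac_perimeter \<alpha> E) \<and>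
    measure lebesgue (sym_diff ((\<lambda>x. x + t *\<^sub>R \<phi> x) ` E) E)
      \<le> C * \<bar>t\<bar> powr \<alpha> * enn2real (frac_perimeter \<alpha> E)"
    if t: "\<bar>t\<bar> < \<epsilon> / 2" and E: "E \<in> sets lebesgue" "E \<subseteq> \<Omega>" and F: "F \<in> sets lebesgue"
      and P: "frac_perimeter \<alpha> E < \<infinity>" for t E F
  proof -
    have f: "diffeomorphism (\<lambda>x. x + t *\<^sub>R \<phi> x)"
      using t by (intro diffeo) simp
    have lip: "L-lipschitz_on UNIV (\<lambda>x. x + t *\<^sub>R \<phi> x)"
      unfolding L_def using t by (intro lipschitz_on_add_scaleR[OF B]) simp
    have disp: "dist (x + t *\<^sub>R \<phi> x) x \<le> \<bar>t\<bar> * M" for x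
      using M(2)[of x] by (simp add: dist_norm mult_left_mono)
    note estimates = measure_diffeomorphism_image_estimates[OF f lip L disp less_imp_le[OF assms(4)]
        E(1) bounded_subset[OF assms(3) E(2)] F P]
    show ?thesis
      using estimates M assms(4) by (simp add: C_def powr_mult mult_ac)
  qed
  then show ?thesis
    using \<epsilon>_pos \<open>0 < C\<close> by (intro exI[of _ "\<epsilon> / 2"] exI[of _ C]) auto
qed

end
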